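(* Let $(\Omega,+)$ be a group and let $a,b$ be central subgroups of $\Omega$ (i.e. contained in the center). Then: (1) the ternary laws $(xyz)\mapsto\Gamma(x,a,y,b,z)$, $\check\Gamma(x,a,y,b,z)$ and $\Gamma(z,b,y,a,x)$ on $\mathcal{P}$ all coincide, and the ternary laws $\Sigma(b,x,y,z)$, $\check\Sigma(b,x,y,z)$, $\check\Sigma(b,z,y,x)$ and $\Sigma(b,z,y,x)$ on $\mathcal{P}$ all coincide; that is, $\mathcal{P}_{ab}=\check{\mathcal{P}}_{ab}=\mathcal{P}_{ba}^{opp}$ and $\mathcal{P}_b=\check{\mathcal{P}}_b=\check{\mathcal{P}}_b^{opp}=\mathcal{P}_b^{opp}$; (2) the set $\mathit{Gras}(\Omega)$ of all subgroups of $\Omega$ is stable under each of the four ternary laws $(x,y,z)\mapsto \Gamma(x,a,y,b,z)$, $\check\Gamma(x,a,y,b,z)$, $\Sigma(b,x,y,z)$, $\check\Sigma(b,x,y,z)$.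
   Context: $(\Omega,+)$ is a group written additively but not necessarily abelian; $\mathcal{P}$ is its power set. For $x,a,y,b,z\in\mathcal{P}$: $\Gamma(x,a,y,b,z)=\{\omega:\exists\alpha\in a,\beta\in b:\ \alpha+\omega+\beta\in y,\ \alpha+\omega\in z,\ \omega+\beta\in x\}$; $\check\Gamma(x,a,y,b,z)=\{\omega:\exists\alpha\in a,\beta\in b:\ \beta+\omega+\alpha\in y,\ \omega+\alpha\in z,\ \beta+\omega\in x\}$; $\Sigma(b,x,y,z)=\{\omega:\exists\beta,\beta'\in b:\ \omega+\beta\in x,\ \omega+\beta'+\beta\in y,\ \omega+\beta'\in z\}$; $\check\Sigma(b,x,y,z)=\{\omega:\exists\beta,\beta'\in b:\ \beta+\omega\in x,\ \beta+\beta'+\omega\in y,\ \beta'+\omega\in z\}$. $\mathcal{P}_{ab},\check{\mathcal P}_{ab},\mathcal P_b,\check{\mathcal P}_b$ denote $\mathcal P$ with the laws $\Gamma(x,a,y,b,z)$, $\check\Gamma(x,a,y,b,z)$, $\Sigma(b,x,y,z)$, $\check\Sigma(b,x,y,z)$ respectively; for a ternary law $(xyz)$, the opposite law is $(x,y,z)\mapsto(zyx)$, denoted by the superscript $opp$. *)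

theory Defs
  imports Main
begin

text \<open>The group (Omega,+) is the type 'a of class group_add (additive, not necessarily
abelian); its power set P is 'a set.\<close>

definition Gamma :: "'a::group_add set \<Rightarrow> 'a set \<Rightarrow> 'a set \<Rightarrow> 'a set \<Rightarrow> 'a set \<Rightarrow> 'a set" where
  "Gamma x a y b z = {\<omega>. \<exists>\<alpha>\<in>a. \<exists>\<beta>\<in>b. \<alpha> + \<omega> + \<beta> \<in> y \<and> \<alpha> + \<omega> \<in> z \<and> \<omega> + \<beta> \<in> x}"

definition Gamma_check :: "'a::group_add set \<Rightarrow> 'a set \<Rightarrow> 'a set \<Rightarrow> 'a set \<Rightarrow> 'a set \<Rightarrow> 'a set" where
  "Gamma_check x a y b z = {\<omega>. \<exists>\<alpha>\<in>a. \<exists>\<beta>\<in>b. \<beta> + \<omega> + \<alpha> \<in> y \<and> \<omega> + \<alpha> \<in> z \<and> \<beta> + \<omega> \<in> x}"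

definition Sigma_law :: "'a::group_add set \<Rightarrow> 'a set \<Rightarrow> 'a set \<Rightarrow> 'a set \<Rightarrow> 'a set" where
  "Sigma_law b x y z = {\<omega>. \<exists>\<beta>\<in>b. \<exists>\<beta>'\<in>b. \<omega> + \<beta> \<in> x \<and> \<omega> + \<beta>' + \<beta> \<in> y \<and> \<omega> + \<beta>' \<in> z}"

definition Sigma_check :: "'a::group_add set \<Rightarrow> 'a set \<Rightarrow> 'a set \<Rightarrow> 'a set \<Rightarrow> 'a set" where
  "Sigma_check b x y z = {\<omega>. \<exists>\<beta>\<in>b. \<exists>\<beta>'\<in>b. \<beta> + \<omega> \<in> x \<and> \<beta> + \<beta>' + \<omega> \<in> y \<and> \<beta>' + \<omega> \<in> z}"

definition is_subgroup :: "'a::group_add set \<Rightarrow> bool" where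
  "is_subgroup H \<longleftrightarrow> 0 \<in> H \<and> (\<forall>u\<in>H. \<forall>v\<in>H. u + v \<in> H) \<and> (\<forall>u\<in>H. - u \<in> H)"

definition Gras :: "'a::group_add set set" where
  "Gras = {H. is_subgroup H}"

definition central :: "'a::group_add set \<Rightarrow> bool" where
  "central H \<longleftrightarrow> (\<forall>h\<in>H. \<forall>g. h + g = g + h)"

end

theory Submission
  imports Defs
begin

text \<open>
  Elements of the central subgroups a and b can be moved freely past \<omega>, so all four laws
  reduce to the normal form
  {\<omega>. \<exists>\<alpha>\<in>a. \<exists>\<beta>\<in>b. \<omega> + \<alpha> + \<beta> \<in> y \<and> \<omega> + \<alpha> \<in> z \<and> \<omega> + \<beta> \<in> x},
  where \<Sigma>(b,x,y,z) is the case a = b. The normal form is symmetric in (x,a) and (z,b), and it is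
  a subgroup when x, y, z are, because for central c one has (u + c) + (v + d) = (u + v) + (c + d)
  and - (u + c) = - u + - c.
\<close>

lemma central_commute: "central A \<Longrightarrow> c \<in> A \<Longrightarrow> c + g = g + c"
  unfolding central_def by blast

lemma central_add_interchange:
  assumes "central A" "c \<in> A"
  shows "u + c + (v + d) = u + v + (c + d)"
proof -
  have "u + c + (v + d) = u + (c + v) + d" by (simp add: add.assoc)
  also have "c + v = v + c" using assms by (rule central_commute)
  finally show ?thesis by (simp add: add.assoc)
qed

lemma central_minus_add:
  assumes "central A" "c \<in> A"
  shows "- (u + c) = - u + - c"
proof -
  have "u + c = c + u" using assms by (rule central_commute [symmetric])
  then show ?thesis by (simp only: minus_add)
qed

lemma central_add_right_commute:
  assumes "central A" "c \<in> A"
  shows "c + u + d = u + d + c"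
proof -
  have "c + u + d = u + (c + d)" by (simp only: central_commute[OF assms, of u] add.assoc)
  also have "c + d = d + c" using assms by (rule central_commute)
  finally show ?thesis by (simp only: add.assoc)
qed

lemma is_subgroupD:
  assumes "is_subgroup H"
  shows "0 \<in> H" "u \<in> H \<Longrightarrow> v \<in> H \<Longrightarrow> u + v \<in> H" "u \<in> H \<Longrightarrow> - u \<in> H"
  using assms by (auto simp: is_subgroup_def)

lemma Gamma_eq:
  assumes "central a"
  shows "Gamma x a y b z = {\<omega>. \<exists>\<alpha>\<in>a. \<exists>\<beta>\<in>b. \<omega> + \<alpha> + \<beta> \<in> y \<and> \<omega> + \<alpha> \<in> z \<and> \<omega> + \<beta> \<in> x}"
  unfolding Gamma_def
  by (intro Collect_cong bex_cong refl) (simp only: central_commute[OF assms])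

lemma Gamma_check_eq_Gamma:
  assumes "central a" "central b"
  shows "Gamma_check x a y b z = Gamma x a y b z"
  unfolding Gamma_check_def Gamma_eq[OF assms(1)]
  by (intro Collect_cong bex_cong refl)
    (simp only: central_add_right_commute[OF assms(2)], simp only: central_commute[OF assms(2)])

lemma Gamma_swap:
  assumes "central a" "central b"
  shows "Gamma x a y b z = Gamma z b y a x"
proof -
  have "\<omega> + \<alpha> + \<beta> \<in> y \<longleftrightarrow> \<omega> + \<beta> + \<alpha> \<in> y" if "\<alpha> \<in> a" for \<alpha> \<beta> \<omega>
    by (simp only: add.assoc central_commute[OF assms(1) that])
  then show ?thesis
    unfolding Gamma_eq[OF assms(1)] Gamma_eq[OF assms(2)] by blast
qed

lemma Sigma_law_eq_Gamma:
  assumes "central b"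
  shows "Sigma_law b x y z = Gamma x b y b z"
  unfolding Sigma_law_def Gamma_eq[OF assms] by blast

lemma Sigma_law_swap:
  assumes "central b"
  shows "Sigma_law b x y z = Sigma_law b z y x"
  unfolding Sigma_law_eq_Gamma[OF assms] using assms assms by (rule Gamma_swap)

lemma Sigma_check_eq_Sigma_law:
  assumes "central b"
  shows "Sigma_check b x y z = Sigma_law b x y z"
proof -
  have "\<beta> + \<beta>' + \<omega> = \<omega> + \<beta>' + \<beta>" if "\<beta> \<in> b" "\<beta>' \<in> b" for \<beta> \<beta>' \<omega>
  proof -
    have "\<beta> + \<beta>' + \<omega> = \<beta>' + \<omega> + \<beta>"
      using assms that(1) by (rule central_add_right_commute)
    also have "\<beta>' + \<omega> = \<omega> + \<beta>'" using assms that(2) by (rule central_commute)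
    finally show ?thesis .
  qed
  then show ?thesis
    unfolding Sigma_check_def Sigma_law_def
    by (intro Collect_cong bex_cong refl) (simp only: central_commute[OF assms])
qed

lemma is_subgroup_Gamma:
  assumes a: "is_subgroup a" "central a" and b: "is_subgroup b" "central b"
    and x: "is_subgroup x" and y: "is_subgroup y" and z: "is_subgroup z"
  shows "is_subgroup (Gamma x a y b z)"
proof -
  let ?G = "{\<omega>. \<exists>\<alpha>\<in>a. \<exists>\<beta>\<in>b. \<omega> + \<alpha> + \<beta> \<in> y \<and> \<omega> + \<alpha> \<in> z \<and> \<omega> + \<beta> \<in> x}"
  have "0 \<in> ?G"
    using is_subgroupD(1)[OF a(1)] is_subgroupD(1)[OF b(1)] is_subgroupD(1)[OF x]
      is_subgroupD(1)[OF y] is_subgroupD(1)[OF z] by force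
  moreover have "u + v \<in> ?G" if u: "u \<in> ?G" and v: "v \<in> ?G" for u v
  proof -
    obtain \<alpha>1 \<beta>1 where 1: "\<alpha>1 \<in> a" "\<beta>1 \<in> b" "u + \<alpha>1 + \<beta>1 \<in> y" "u + \<alpha>1 \<in> z" "u + \<beta>1 \<in> x"
      using u by blast
    obtain \<alpha>2 \<beta>2 where 2: "\<alpha>2 \<in> a" "\<beta>2 \<in> b" "v + \<alpha>2 + \<beta>2 \<in> y" "v + \<alpha>2 \<in> z" "v + \<beta>2 \<in> x"
      using v by blast
    note interchange = central_add_interchange[OF b(2) 1(2)] central_add_interchange[OF a(2) 1(1)]
    have "u + v + (\<alpha>1 + \<alpha>2) + (\<beta>1 + \<beta>2) \<in> y"
      using is_subgroupD(2)[OF y 1(3) 2(3)] by (simp only: interchange)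
    moreover have "u + v + (\<alpha>1 + \<alpha>2) \<in> z"
      using is_subgroupD(2)[OF z 1(4) 2(4)] by (simp only: interchange)
    moreover have "u + v + (\<beta>1 + \<beta>2) \<in> x"
      using is_subgroupD(2)[OF x 1(5) 2(5)] by (simp only: interchange)
    moreover have "\<alpha>1 + \<alpha>2 \<in> a" "\<beta>1 + \<beta>2 \<in> b"
      using is_subgroupD(2)[OF a(1) 1(1) 2(1)] is_subgroupD(2)[OF b(1) 1(2) 2(2)] .
    ultimately show ?thesis by blast
  qed
  moreover have "- u \<in> ?G" if u: "u \<in> ?G" for u
  proof -
    obtain \<alpha> \<beta> where 1: "\<alpha> \<in> a" "\<beta> \<in> b" "u + \<alpha> + \<beta> \<in> y" "u + \<alpha> \<in> z" "u + \<beta> \<in> x"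
      using u by blast
    note minus_add = central_minus_add[OF b(2) 1(2)] central_minus_add[OF a(2) 1(1)]
    have "- u + - \<alpha> + - \<beta> \<in> y"
      using is_subgroupD(3)[OF y 1(3)] by (simp only: minus_add)
    moreover have "- u + - \<alpha> \<in> z"
      using is_subgroupD(3)[OF z 1(4)] by (simp only: minus_add)
    moreover have "- u + - \<beta> \<in> x"
      using is_subgroupD(3)[OF x 1(5)] by (simp only: minus_add)
    moreover have "- \<alpha> \<in> a" "- \<beta> \<in> b"
      using is_subgroupD(3)[OF a(1) 1(1)] is_subgroupD(3)[OF b(1) 1(2)] .
    ultimately show ?thesis by blast
  qed
  ultimately show ?thesis
    unfolding Gamma_eq[OF a(2)] is_subgroup_def by blast
qed

theorem theorem3p3:
  fixes a b :: "'a::group_add set"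
  assumes "is_subgroup a" and "central a" and "is_subgroup b" and "central b"
  shows "(\<forall>x y z. Gamma x a y b z = Gamma_check x a y b z
                 \<and> Gamma_check x a y b z = Gamma z b y a x)
       \<and> (\<forall>x y z. Sigma_law b x y z = Sigma_check b x y z
                 \<and> Sigma_check b x y z = Sigma_check b z y x
                 \<and> Sigma_check b z y x = Sigma_law b z y x)
       \<and> (\<forall>x\<in>Gras. \<forall>y\<in>Gras. \<forall>z\<in>Gras.
              Gamma x a y b z \<in> Gras \<and> Gamma_check x a y b z \<in> Gras
            \<and> Sigma_law b x y z \<in> Gras \<and> Sigma_check b x y z \<in> Gras)"
proof (intro conjI allI ballI)
  fix x y z :: "'a set"
  note Gamma_check = Gamma_check_eq_Gamma[OF assms(2,4)]
  note Sigma_check = Sigma_check_eq_Sigma_law[OF assms(4)]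
  show "Gamma x a y b z = Gamma_check x a y b z" by (simp only: Gamma_check)
  show "Gamma_check x a y b z = Gamma z b y a x" by (simp only: Gamma_check Gamma_swap[OF assms(2,4)])
  show "Sigma_law b x y z = Sigma_check b x y z" by (simp only: Sigma_check)
  show "Sigma_check b x y z = Sigma_check b z y x" by (simp only: Sigma_check Sigma_law_swap[OF assms(4)])
  show "Sigma_check b z y x = Sigma_law b z y x" by (simp only: Sigma_check)
next
  fix x y z :: "'a set"
  assume "x \<in> Gras" "y \<in> Gras" "z \<in> Gras"
  then have xyz: "is_subgroup x" "is_subgroup y" "is_subgroup z" by (simp_all add: Gras_def)
  have "is_subgroup (Gamma x a y b z)" using assms xyz by (rule is_subgroup_Gamma)
  moreover have "is_subgroup (Gamma x b y b z)" using assms(3,4,3,4) xyz by (rule is_subgroup_Gamma)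
  ultimately show "Gamma x a y b z \<in> Gras" "Gamma_check x a y b z \<in> Gras"
    "Sigma_law b x y z \<in> Gras" "Sigma_check b x y z \<in> Gras"
    by (simp_all add: Gras_def Gamma_check_eq_Gamma[OF assms(2,4)]
        Sigma_check_eq_Sigma_law[OF assms(4)] Sigma_law_eq_Gamma[OF assms(4)])
qed

end
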